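(* Let $G(V)$ be a network, $\varepsilon>0$, and $S\subseteq V$ with $|S|\ge2$ such that $R_{\mathrm{eff}}(u,v)\ge\varepsilon$ for all distinct $u,v\in S$. Then there is $S'\subseteq S$ with $|S'|\ge|S|/2$ such that $R_{\mathrm{eff}}(v,S\setminus\{v\})\ge\varepsilon/4$ for every $v\in S'$.
   Context: A network is a finite connected graph $G=(V,E)$ with symmetric conductances $c_{xy}\ge0$, $c_{xy}>0$ iff $xy\in E$; $R_{\mathrm{eff}}$ is effective resistance. For $v\in V$ and nonempty $T\subseteq V\setminus\{v\}$, $R_{\mathrm{eff}}(v,T)$ is the effective resistance between $v$ and the vertex obtained by identifying all vertices of $T$ into one vertex (conductances from $x$ to the glued vertex being $\sum_{y\in T}c_{xy}$). *)

theory Defs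
  imports Main Complex_Main
begin

definition network :: "'a set \<Rightarrow> ('a \<Rightarrow> 'a \<Rightarrow> real) \<Rightarrow> bool" where
  "network V c \<longleftrightarrow> finite V \<and> V \<noteq> {} \<and>
     (\<forall>x y. c x y = c y x) \<and> (\<forall>x y. c x y \<ge> 0) \<and>
     (\<forall>x y. c x y > 0 \<longrightarrow> x \<in> V \<and> y \<in> V) \<and>
     (\<forall>x\<in>V. \<forall>y\<in>V. (\<lambda>a b. c a b > 0)\<^sup>*\<^sup>* x y)"

definition energy :: "'a set \<Rightarrow> ('a \<Rightarrow> 'a \<Rightarrow> real) \<Rightarrow> ('a \<Rightarrow> real) \<Rightarrow> real" where
  "energy V c f = (1/2) * (\<Sum>x\<in>V. \<Sum>y\<in>V. c x y * (f x - f y)^2)"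

text \<open>Effective conductance between v and the set T (all of T glued to one vertex),
by the Dirichlet principle: infimum of the energy over potentials equal to 1 at v and
0 on T.  Functions vanishing on T are exactly the potentials of the glued network.\<close>
definition eff_cond :: "'a set \<Rightarrow> ('a \<Rightarrow> 'a \<Rightarrow> real) \<Rightarrow> 'a \<Rightarrow> 'a set \<Rightarrow> real" where
  "eff_cond V c v T = Inf {energy V c f | f. f v = 1 \<and> (\<forall>x\<in>T. f x = 0)}"

definition R_eff_set :: "'a set \<Rightarrow> ('a \<Rightarrow> 'a \<Rightarrow> real) \<Rightarrow> 'a \<Rightarrow> 'a set \<Rightarrow> real" where
  "R_eff_set V c v T = 1 / eff_cond V c v T"

definition R_eff :: "'a set \<Rightarrow> ('a \<Rightarrow> 'a \<Rightarrow> real) \<Rightarrow> 'a \<Rightarrow> 'a \<Rightarrow> real" where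
  "R_eff V c u v = R_eff_set V c u {v}"

end

theory Submission
  imports Defs
begin

(* Let Phi_u (u in S) be the harmonic measures of S and L(u,v) = (Laplacian Phi_u)(v)
   the Kron-reduced Laplacian on S.  L is symmetric with zero row sums and nonpositive
   off-diagonal entries, and L(u,u) = energy Phi_u >= C_eff(u, S - {u}).  Fixing r in S and
   unit-current potentials g_w from w to r, the numbers R(u,v) = energy (g_u - g_v) satisfy
   R(u,v) >= 1/C_eff(u,v) >= eps (Cauchy-Schwarz), and Green's identity yields the trace
   identity  sum_{u,v} L(u,v) R(u,v) = -2(|S| - 1).  Each row is at most -eps L(u,u), so
   eps * sum_u L(u,u) <= 2(|S| - 1); by Markov at least half of S has L(v,v) <= 4/eps, and
   for those R_eff(v, S - {v}) = 1/C_eff(v, S - {v}) >= 1/L(v,v) >= eps/4. *)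

definition laplacian :: "'a set \<Rightarrow> ('a \<Rightarrow> 'a \<Rightarrow> real) \<Rightarrow> ('a \<Rightarrow> real) \<Rightarrow> 'a \<Rightarrow> real" where
  "laplacian V c f x = (\<Sum>y\<in>V. c x y * (f x - f y))"

definition dirichlet_form ::
  "'a set \<Rightarrow> ('a \<Rightarrow> 'a \<Rightarrow> real) \<Rightarrow> ('a \<Rightarrow> real) \<Rightarrow> ('a \<Rightarrow> real) \<Rightarrow> real" where
  "dirichlet_form V c f g = (1/2) * (\<Sum>x\<in>V. \<Sum>y\<in>V. c x y * (f x - f y) * (g x - g y))"

definition delta :: "'a \<Rightarrow> 'a \<Rightarrow> real" where
  "delta u x = (if x = u then 1 else 0)"

lemma sum_times_delta:
  assumes "finite A" "u \<in> A"
  shows "(\<Sum>x\<in>A. F x * delta u x) = F u"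
proof -
  have "(\<Sum>x\<in>A. F x * delta u x) = (\<Sum>x\<in>A. if x = u then F x else 0)"
    by (intro sum.cong) (auto simp: delta_def)
  also have "\<dots> = F u" using assms by simp
  finally show ?thesis .
qed

lemma green_identity:
  assumes sym: "\<forall>x y. c x y = c y x"
  shows "(\<Sum>x\<in>V. g x * laplacian V c f x) = dirichlet_form V c f g"
proof -
  define A where "A = (\<Sum>x\<in>V. \<Sum>y\<in>V. c x y * (f x - f y) * g x)"
  have lhs: "(\<Sum>x\<in>V. g x * laplacian V c f x) = A"
    unfolding A_def laplacian_def by (simp add: sum_distrib_left mult.commute mult.left_commute)
  have "A = (\<Sum>y\<in>V. \<Sum>x\<in>V. c x y * (f x - f y) * g x)"
    unfolding A_def by (rule sum.swap)
  also have "\<dots> = (\<Sum>x\<in>V. \<Sum>y\<in>V. c x y * (f y - f x) * g y)"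
    by (intro sum.cong refl) (metis sym)
  finally have swapped: "A = (\<Sum>x\<in>V. \<Sum>y\<in>V. c x y * (f y - f x) * g y)" .
  have "2 * A = (\<Sum>x\<in>V. \<Sum>y\<in>V. c x y * (f x - f y) * g x + c x y * (f y - f x) * g y)"
    using swapped unfolding A_def by (simp add: sum.distrib)
  also have "\<dots> = (\<Sum>x\<in>V. \<Sum>y\<in>V. c x y * (f x - f y) * (g x - g y))"
    by (intro sum.cong refl) (simp add: algebra_simps)
  finally show ?thesis using lhs unfolding dirichlet_form_def by simp
qed

lemma dirichlet_form_sym: "dirichlet_form V c f g = dirichlet_form V c g f"
  unfolding dirichlet_form_def by (simp add: mult.commute mult.left_commute)

lemma energy_eq_dirichlet_form: "energy V c f = dirichlet_form V c f f"
  unfolding dirichlet_form_def energy_def by (simp add: power2_eq_square mult.assoc)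

lemma energy_nonneg: "\<forall>x y. c x y \<ge> 0 \<Longrightarrow> energy V c f \<ge> 0"
  unfolding energy_def by (auto intro!: sum_nonneg)

lemma laplacian_sum_zero:
  assumes "\<forall>x y. c x y = c y x"
  shows "(\<Sum>x\<in>V. laplacian V c f x) = 0"
  using green_identity[OF assms, where V=V and g="\<lambda>_. 1" and f=f] by (simp add: dirichlet_form_def)

lemma laplacian_diff:
  "laplacian V c (\<lambda>x. f x - g x) x = laplacian V c f x - laplacian V c g x"
  unfolding laplacian_def by (simp add: sum_subtractf[symmetric] algebra_simps)

lemma laplacian_divide: "laplacian V c (\<lambda>x. f x / k) x = laplacian V c f x / k"
  unfolding laplacian_def sum_divide_distrib
  by (intro sum.cong refl) (simp add: diff_divide_distrib[symmetric])

lemma dirichlet_form_expand: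
  "dirichlet_form V c (\<lambda>x. f x - t * g x) (\<lambda>x. f x - t * g x)
     = dirichlet_form V c f f - 2 * t * dirichlet_form V c f g + t\<^sup>2 * dirichlet_form V c g g"
proof -
  have summand: "c x y * ((f x - t * g x) - (f y - t * g y)) * ((f x - t * g x) - (f y - t * g y))
     = c x y * (f x - f y) * (f x - f y) - 2 * t * (c x y * (f x - f y) * (g x - g y))
       + t\<^sup>2 * (c x y * (g x - g y) * (g x - g y))" for x y
    by (simp add: algebra_simps power2_eq_square)
  show ?thesis unfolding dirichlet_form_def
    by (simp only: summand sum.distrib sum_subtractf sum_distrib_left[symmetric]) (simp add: algebra_simps)
qed

lemma dirichlet_form_cauchy_schwarz:
  assumes "\<forall>x y. c x y \<ge> 0"
  shows "(dirichlet_form V c f g)\<^sup>2 \<le> energy V c f * energy V c g"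
proof -
  let ?ff = "dirichlet_form V c f f" and ?fg = "dirichlet_form V c f g"
    and ?gg = "dirichlet_form V c g g"
  have quadratic_nonneg: "0 \<le> ?ff - 2 * t * ?fg + t\<^sup>2 * ?gg" for t
    using energy_nonneg[OF assms, of V "\<lambda>x. f x - t * g x"] dirichlet_form_expand[of V c f t g]
    by (simp add: energy_eq_dirichlet_form)
  have gg: "?gg \<ge> 0" using energy_nonneg[OF assms] energy_eq_dirichlet_form by metis
  show ?thesis
  proof (cases "?gg = 0")
    case True
    have "?fg = 0"
    proof (rule ccontr)
      assume "?fg \<noteq> 0"
      with quadratic_nonneg[of "(?ff + 1) / (2 * ?fg)"] True show False by simp
    qed
    then show ?thesis using energy_nonneg[OF assms] by (simp add: mult_nonneg_nonneg)
  next
    case False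
    with gg have pos: "?gg > 0" by simp
    from quadratic_nonneg[of "?fg / ?gg"] pos have "?fg\<^sup>2 / ?gg \<le> ?ff"
      by (simp add: power2_eq_square field_simps)
    with pos show ?thesis by (simp add: field_simps energy_eq_dirichlet_form)
  qed
qed

(* Eliminating a vertex z (star-mesh transform): a potential harmonic off B for the
   reduced conductances on V extends, by its weighted average at z, to a potential
   harmonic off B on insert z V for the original conductances. *)
lemma harmonic_extension_by_elimination:
  fixes c :: "'a \<Rightarrow> 'a \<Rightarrow> real"
  assumes fin: "finite V" and z: "z \<notin> V"
    and sym: "\<forall>x y. c x y = c y x" and nonneg: "\<forall>x y. 0 \<le> c x y"
  defines "d \<equiv> \<Sum>y\<in>V. c z y"
  assumes range: "\<forall>x. 0 \<le> \<phi> x \<and> \<phi> x \<le> 1"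
    and harmonic: "\<forall>x\<in>V - B. laplacian V (\<lambda>x y. c x y + c x z * c z y / d) \<phi> x = 0"
  defines "\<psi> \<equiv> \<phi>(z := (\<Sum>y\<in>V. c z y * \<phi> y) / d)"
  shows "(\<forall>x. 0 \<le> \<psi> x \<and> \<psi> x \<le> 1) \<and> (\<forall>x\<in>insert z V - B. laplacian (insert z V) c \<psi> x = 0)"
proof -
  define N where "N = (\<Sum>y\<in>V. c z y * \<phi> y)"
  have d_nonneg: "d \<ge> 0" unfolding d_def using nonneg by (simp add: sum_nonneg)
  have d_zero: "c z y = 0" if "d = 0" "y \<in> V" for y
    using that nonneg fin unfolding d_def by (simp add: sum_nonneg_eq_0_iff)
  have N_bounds: "0 \<le> N" "N \<le> d" unfolding N_def d_def
    using nonneg range by (auto intro!: sum_nonneg sum_mono simp: mult_left_le)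
  have \<psi>_V: "\<psi> y = \<phi> y" if "y \<in> V" for y unfolding \<psi>_def using z that by auto
  have \<psi>_z: "\<psi> z = N / d" unfolding \<psi>_def N_def by simp
  have flux_z: "(\<Sum>y\<in>V. c z y * (a - \<phi> y)) = a * d - N" for a
    unfolding d_def N_def by (simp add: sum_subtractf right_diff_distrib sum_distrib_left mult.commute)
  have range_\<psi>: "0 \<le> \<psi> x \<and> \<psi> x \<le> 1" for x
    using range N_bounds d_nonneg unfolding \<psi>_def N_def[symmetric]
    by (cases "x = z"; cases "d = 0") (auto simp: divide_le_eq_1)
  have harmonic_z: "laplacian (insert z V) c \<psi> z = 0"
  proof -
    have "laplacian (insert z V) c \<psi> z = (\<Sum>y\<in>V. c z y * (\<psi> z - \<phi> y))"
      unfolding laplacian_def using z fin \<psi>_V by simp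
    also have "\<dots> = \<psi> z * d - N" by (rule flux_z)
    also have "\<dots> = 0" using d_zero \<psi>_z unfolding N_def by (cases "d = 0") auto
    finally show ?thesis .
  qed
  have harmonic_V: "laplacian (insert z V) c \<psi> x = 0" if x: "x \<in> V - B" for x
  proof -
    have "laplacian (insert z V) c \<psi> x = c x z * (\<phi> x - N / d) + (\<Sum>y\<in>V. c x y * (\<phi> x - \<phi> y))"
      unfolding laplacian_def using x z fin \<psi>_V \<psi>_z by simp
    also have "\<dots> = (\<Sum>y\<in>V. c x y * (\<phi> x - \<phi> y)) + c x z / d * (\<phi> x * d - N)"
    proof (cases "d = 0")
      case True
      then have "c x z = 0" using d_zero x sym by auto
      then show ?thesis by simp
    qed (simp add: field_simps)
    also have "\<dots> = laplacian V (\<lambda>x y. c x y + c x z * c z y / d) \<phi> x"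
    proof -
      have "(c x y + c x z * c z y / d) * (\<phi> x - \<phi> y)
          = c x y * (\<phi> x - \<phi> y) + c x z / d * (c z y * (\<phi> x - \<phi> y))" for y
        by (simp add: algebra_simps add_divide_distrib[symmetric])
      then show ?thesis
        unfolding laplacian_def flux_z[symmetric] by (simp add: sum.distrib sum_distrib_left)
    qed
    also have "\<dots> = 0" using harmonic x by blast
    finally show ?thesis .
  qed
  show ?thesis using range_\<psi> harmonic_z harmonic_V by blast
qed

(* The Dirichlet problem with boundary data in [0,1] is solvable, with values in [0,1];
   induction on the number of interior vertices, eliminating one at a time. *)
lemma dirichlet_problem:
  fixes c :: "'a \<Rightarrow> 'a \<Rightarrow> real" and h :: "'a \<Rightarrow> real"
  assumes "\<forall>x. 0 \<le> h x \<and> h x \<le> 1" and "finite V" and "B \<subseteq> V"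
    and "\<forall>x y. c x y = c y x" and "\<forall>x y. 0 \<le> c x y"
  shows "\<exists>\<phi>. (\<forall>x\<in>B. \<phi> x = h x) \<and> (\<forall>x. 0 \<le> \<phi> x \<and> \<phi> x \<le> 1)
             \<and> (\<forall>x\<in>V - B. laplacian V c \<phi> x = 0)"
  using assms(2-5)
proof (induction "card (V - B)" arbitrary: V c)
  case 0
  then have "V - B = {}" by simp
  then show ?case using assms(1) by (intro exI[of _ h]) auto
next
  case (Suc n)
  then obtain z where z: "z \<in> V - B" by (metis card.empty ex_in_conv nat.distinct(1))
  define V' where "V' = V - {z}"
  define c' where "c' = (\<lambda>x y. c x y + c x z * c z y / (\<Sum>y\<in>V'. c z y))"
  have V: "V = insert z V'" "z \<notin> V'" and fin': "finite V'" and B': "B \<subseteq> V'"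
    using z Suc.prems V'_def by auto
  have "card (V' - B) = n"
    using Suc.hyps(2) z unfolding V'_def by (simp add: Diff_insert2[symmetric] card_Diff_singleton)
  moreover have "\<forall>x y. c' x y = c' y x" "\<forall>x y. 0 \<le> c' x y"
    unfolding c'_def using Suc.prems by (auto simp: mult.commute sum_nonneg)
  ultimately obtain \<phi> where boundary: "\<forall>x\<in>B. \<phi> x = h x"
    and range: "\<forall>x. 0 \<le> \<phi> x \<and> \<phi> x \<le> 1" and harmonic: "\<forall>x\<in>V' - B. laplacian V' c' \<phi> x = 0"
    using Suc.hyps(1)[OF _ fin' B'] by blast
  define \<psi> where "\<psi> = \<phi>(z := (\<Sum>y\<in>V'. c z y * \<phi> y) / (\<Sum>y\<in>V'. c z y))"
  have "\<forall>x\<in>B. \<psi> x = h x" using boundary z unfolding \<psi>_def by auto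
  moreover have "(\<forall>x. 0 \<le> \<psi> x \<and> \<psi> x \<le> 1) \<and> (\<forall>x\<in>V - B. laplacian V c \<psi> x = 0)"
    using harmonic_extension_by_elimination[OF fin' V(2), of c \<phi> B] Suc.prems range harmonic
    unfolding V(1) \<psi>_def c'_def by blast
  ultimately show ?case by blast
qed

lemma eff_cond_le_energy:
  assumes "\<forall>x y. 0 \<le> c x y" and "f v = 1" and "\<forall>x\<in>T. f x = 0"
  shows "eff_cond V c v T \<le> energy V c f"
  unfolding eff_cond_def
proof (rule cInf_lower)
  show "bdd_below {energy V c f |f. f v = 1 \<and> (\<forall>x\<in>T. f x = 0)}"
    using energy_nonneg[OF assms(1)] by (auto intro!: bdd_belowI[of _ 0])
qed (use assms(2,3) in auto)

lemma eff_cond_greatest: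
  assumes "v \<notin> T" and "\<And>f. f v = 1 \<Longrightarrow> \<forall>x\<in>T. f x = 0 \<Longrightarrow> a \<le> energy V c f"
  shows "a \<le> eff_cond V c v T"
  unfolding eff_cond_def
proof (rule cInf_greatest)
  show "{energy V c f |f. f v = 1 \<and> (\<forall>x\<in>T. f x = 0)} \<noteq> {}"
    using assms(1) by (auto intro!: exI[of _ "delta v"] simp: delta_def)
qed (use assms(2) in auto)

lemma eff_cond_mono:
  assumes "\<forall>x y. 0 \<le> c x y" and "T \<subseteq> T'" and "v \<notin> T'"
  shows "eff_cond V c v T \<le> eff_cond V c v T'"
  using assms by (intro eff_cond_greatest eff_cond_le_energy) auto

lemma row_estimate:
  fixes L R :: "'a \<Rightarrow> real"
  assumes "finite S" and "u \<in> S" and "(\<Sum>v\<in>S. L v) = 0" and "R u = 0"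
    and "\<And>v. v \<in> S - {u} \<Longrightarrow> L v \<le> 0 \<and> \<epsilon> \<le> R v"
  shows "(\<Sum>v\<in>S. L v * R v) \<le> - \<epsilon> * L u"
proof -
  have "(\<Sum>v\<in>S. L v * R v) = (\<Sum>v\<in>S - {u}. L v * R v)"
    using sum.remove[OF assms(1,2), of "\<lambda>v. L v * R v"] assms(4) by simp
  also have "\<dots> \<le> (\<Sum>v\<in>S - {u}. L v * \<epsilon>)"
    using assms(5) by (intro sum_mono mult_left_mono_neg) auto
  also have "\<dots> = \<epsilon> * (\<Sum>v\<in>S - {u}. L v)" by (simp add: sum_distrib_left mult.commute)
  also have "(\<Sum>v\<in>S - {u}. L v) = - L u"
    using sum.remove[OF assms(1,2), of L] assms(3) by simp
  finally show ?thesis by simp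
qed

lemma markov_counting:
  fixes D :: "'a \<Rightarrow> real"
  assumes "finite S" and "\<epsilon> > 0" and "\<forall>u\<in>S. 0 \<le> D u" and "\<epsilon> * (\<Sum>u\<in>S. D u) \<le> 2 * real (card S)"
  shows "card S \<le> 2 * card {u\<in>S. D u \<le> 4 / \<epsilon>}"
proof (rule ccontr)
  define good where "good = {u\<in>S. D u \<le> 4 / \<epsilon>}"
  assume "\<not> card S \<le> 2 * card {u\<in>S. D u \<le> 4 / \<epsilon>}"
  then have few_good: "2 * card good < card S" unfolding good_def by simp
  have card_bad: "card (S - good) = card S - card good"
    using assms(1) by (simp add: card_Diff_subset good_def)
  have "card good \<le> card S" using assms(1) by (intro card_mono) (auto simp: good_def)
  then have many_bad: "real (card S) < 2 * real (card (S - good))" using few_good card_bad by linarith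
  then have "S - good \<noteq> {}" by (intro notI) simp
  then have "(\<Sum>u\<in>S - good. 4 / \<epsilon>) < (\<Sum>u\<in>S - good. D u)"
    using assms(1) by (intro sum_strict_mono) (auto simp: good_def)
  also have "\<dots> \<le> (\<Sum>u\<in>S. D u)" using assms(1,3) by (intro sum_mono2) auto
  finally have "real (card (S - good)) * 4 < \<epsilon> * (\<Sum>u\<in>S. D u)"
    using assms(2) by (simp add: field_simps)
  with assms(4) many_bad show False by linarith
qed

lemma exists_other_point:
  assumes "card S \<ge> 2"
  shows "\<exists>w\<in>S. w \<noteq> v"
proof -
  have "finite S"
  proof (rule ccontr)
    assume "infinite S"
    with assms show False by simp
  qed
  then have "1 \<le> card (S - {v})"
    using assms by (cases "v \<in> S") (simp_all add: card_Diff_singleton_if)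
  then have "S - {v} \<noteq> {}" by (intro notI) simp
  then show ?thesis by blast
qed

(* Finite symmetric nonnegative conductances. *)
locale conductance_network =
  fixes V :: "'a set" and c :: "'a \<Rightarrow> 'a \<Rightarrow> real"
  assumes finite_V: "finite V"
    and sym: "\<forall>x y. c x y = c y x"
    and nonneg: "\<forall>x y. 0 \<le> c x y"
begin

(* A potential driving a unit current from u to v has energy at least the effective
   resistance 1 / C_eff(u,v) (Thomson's principle, one direction), by Cauchy-Schwarz. *)
lemma unit_current_energy:
  assumes "u \<in> V" "v \<in> V" "u \<noteq> v"
    and current: "\<forall>x\<in>V. laplacian V c \<psi> x = delta u x - delta v x"
  shows "1 \<le> eff_cond V c u {v} * energy V c \<psi>"
proof -
  have bound: "1 \<le> energy V c \<psi> * energy V c f" if "f u = 1" "f v = 0" for f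
  proof -
    have "dirichlet_form V c \<psi> f = (\<Sum>x\<in>V. f x * laplacian V c \<psi> x)"
      using green_identity[OF sym] by metis
    also have "\<dots> = (\<Sum>x\<in>V. f x * delta u x) - (\<Sum>x\<in>V. f x * delta v x)"
      using current by (simp add: right_diff_distrib sum_subtractf)
    also have "\<dots> = 1" using sum_times_delta[OF finite_V] assms(1,2) that by simp
    finally show ?thesis using dirichlet_form_cauchy_schwarz[OF nonneg, of V \<psi> f] by simp
  qed
  have "1 \<le> energy V c \<psi> * energy V c (delta u)"
    using bound assms(3) by (simp add: delta_def)
  then have "0 < energy V c \<psi>"
    using energy_nonneg[OF nonneg, of V \<psi>] by (cases "energy V c \<psi> = 0") auto
  moreover have "1 / energy V c \<psi> \<le> eff_cond V c u {v}"
    using bound \<open>0 < energy V c \<psi>\<close> assms(3)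
    by (intro eff_cond_greatest) (auto simp: field_simps)
  ultimately show ?thesis by (simp add: field_simps)
qed

(* If C_eff(w,r) > 0 there is a unit current from w to r: normalise the potential that
   is 1 at w, 0 at r and harmonic elsewhere by the current it drives. *)
lemma unit_current_exists:
  assumes w: "w \<in> V" and r: "r \<in> V" "w \<noteq> r" and pos: "0 < eff_cond V c w {r}"
  shows "\<exists>g. \<forall>x\<in>V. laplacian V c g x = delta w x - delta r x"
proof -
  have "\<forall>x. 0 \<le> delta w x \<and> delta w x \<le> 1" by (simp add: delta_def)
  moreover have "{w, r} \<subseteq> V" using w r by simp
  ultimately obtain \<Psi> where boundary: "\<forall>x\<in>{w, r}. \<Psi> x = delta w x"
    and harmonic: "\<forall>x\<in>V - {w, r}. laplacian V c \<Psi> x = 0"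
    using dirichlet_problem[OF _ finite_V _ sym nonneg] by metis
  define \<kappa> where "\<kappa> = laplacian V c \<Psi> w"
  have restrict: "(\<Sum>x\<in>V. F x * laplacian V c \<Psi> x) = (\<Sum>x\<in>{w, r}. F x * laplacian V c \<Psi> x)" for F
    using harmonic w r finite_V by (intro sum.mono_neutral_right) auto
  have at_r: "laplacian V c \<Psi> r = - \<kappa>"
    using restrict[of "\<lambda>_. 1"] laplacian_sum_zero[OF sym] r unfolding \<kappa>_def by simp
  have "energy V c \<Psi> = \<kappa>"
    using restrict[of \<Psi>] green_identity[OF sym] boundary r
    unfolding \<kappa>_def energy_eq_dirichlet_form by (simp add: delta_def)
  moreover have "eff_cond V c w {r} \<le> energy V c \<Psi>"
    using boundary r by (intro eff_cond_le_energy[OF nonneg]) (auto simp: delta_def)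
  ultimately have "\<kappa> > 0" using pos by linarith
  then have "\<forall>x\<in>V. laplacian V c (\<lambda>x. \<Psi> x / \<kappa>) x = delta w x - delta r x"
    using harmonic at_r r by (auto simp: laplacian_divide \<kappa>_def delta_def)
  then show ?thesis by blast
qed

end

locale terminal_set = conductance_network +
  fixes S :: "'a set"
  assumes S_sub: "S \<subseteq> V"
begin

lemma finite_S: "finite S"
  using finite_subset[OF S_sub finite_V] .

definition harmonic_measure :: "'a \<Rightarrow> 'a \<Rightarrow> real" where
  "harmonic_measure u = (SOME \<phi>. (\<forall>x\<in>S. \<phi> x = delta u x) \<and> (\<forall>x. 0 \<le> \<phi> x \<and> \<phi> x \<le> 1)
                                  \<and> (\<forall>x\<in>V - S. laplacian V c \<phi> x = 0))"

lemma harmonic_measure: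
  "(\<forall>x\<in>S. harmonic_measure u x = delta u x)
   \<and> (\<forall>x. 0 \<le> harmonic_measure u x \<and> harmonic_measure u x \<le> 1)
   \<and> (\<forall>x\<in>V - S. laplacian V c (harmonic_measure u) x = 0)"
proof -
  have "\<forall>x. 0 \<le> delta u x \<and> delta u x \<le> 1" by (simp add: delta_def)
  from dirichlet_problem[OF this finite_V S_sub sym nonneg] show ?thesis
    unfolding harmonic_measure_def by (rule someI_ex)
qed

(* The Kron reduction (Schur complement) of the Laplacian onto S: kron u v is the current
   at v produced by the harmonic measure of u. *)
definition kron :: "'a \<Rightarrow> 'a \<Rightarrow> real" where
  "kron u v = laplacian V c (harmonic_measure u) v"

(* The Laplacian of a harmonic measure is supported on S. *)
lemma sum_against_kron:
  "(\<Sum>x\<in>V. F x * laplacian V c (harmonic_measure u) x) = (\<Sum>x\<in>S. F x * kron u x)"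
  using harmonic_measure finite_V S_sub unfolding kron_def by (intro sum.mono_neutral_right) auto

lemma kron_row_sum: "(\<Sum>v\<in>S. kron u v) = 0"
proof -
  have "(\<Sum>v\<in>S. kron u v) = (\<Sum>x\<in>V. 1 * laplacian V c (harmonic_measure u) x)"
    using sum_against_kron[of "\<lambda>_. 1" u] by (simp only: mult_1)
  also have "\<dots> = 0" by (simp add: laplacian_sum_zero[OF sym])
  finally show ?thesis .
qed

lemma kron_eq_dirichlet_form:
  assumes "v \<in> S"
  shows "kron u v = dirichlet_form V c (harmonic_measure u) (harmonic_measure v)"
proof -
  have "dirichlet_form V c (harmonic_measure u) (harmonic_measure v)
      = (\<Sum>x\<in>S. harmonic_measure v x * kron u x)"
    by (simp only: green_identity[OF sym, symmetric] sum_against_kron)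
  also have "\<dots> = (\<Sum>x\<in>S. kron u x * delta v x)"
    using harmonic_measure by (intro sum.cong) (auto simp: mult.commute)
  also have "\<dots> = kron u v" using sum_times_delta[OF finite_S assms] .
  finally show ?thesis by simp
qed

lemma kron_sym: "u \<in> S \<Longrightarrow> v \<in> S \<Longrightarrow> kron u v = kron v u"
  using kron_eq_dirichlet_form[of u v] kron_eq_dirichlet_form[of v u]
    dirichlet_form_sym[of V c "harmonic_measure u"] by simp

lemma kron_diag_eq_energy: "u \<in> S \<Longrightarrow> kron u u = energy V c (harmonic_measure u)"
  using kron_eq_dirichlet_form[of u u] by (simp add: energy_eq_dirichlet_form)

(* Off-diagonal entries are nonpositive since harmonic measures are nonnegative. *)
lemma kron_offdiag_nonpos:
  assumes "v \<in> S" and "u \<noteq> v"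
  shows "kron u v \<le> 0"
proof -
  have "kron u v = (\<Sum>y\<in>V. c v y * (0 - harmonic_measure u y))"
    using harmonic_measure assms unfolding kron_def laplacian_def by (simp add: delta_def)
  also have "\<dots> \<le> 0"
    using nonneg harmonic_measure by (intro sum_nonpos) (simp add: mult_nonneg_nonneg)
  finally show ?thesis .
qed

lemma kron_diag_nonneg: "u \<in> S \<Longrightarrow> 0 \<le> kron u u"
  by (simp add: kron_diag_eq_energy energy_nonneg[OF nonneg])

(* The harmonic measure of u is admissible for C_eff(u, S - {u}). *)
lemma eff_cond_le_kron_diag:
  assumes "u \<in> S"
  shows "eff_cond V c u (S - {u}) \<le> kron u u"
proof -
  have "harmonic_measure u u = 1" "\<forall>x\<in>S - {u}. harmonic_measure u x = 0"
    using harmonic_measure[of u] assms by (auto simp: delta_def)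
  then have "eff_cond V c u (S - {u}) \<le> energy V c (harmonic_measure u)"
    by (intro eff_cond_le_energy[OF nonneg]) auto
  then show ?thesis using kron_diag_eq_energy[OF assms] by simp
qed

(* Fix a reference terminal r and unit-current potentials g w from each terminal w to r;
   energy (g u - g v) then plays the role of the resistance between u and v. *)
context
  fixes r :: 'a and g :: "'a \<Rightarrow> 'a \<Rightarrow> real"
  assumes r: "r \<in> S"
    and unit_current: "\<forall>w\<in>S. \<forall>x\<in>V. laplacian V c (g w) x = delta w x - delta r x"
begin

lemma potential_dirichlet_form:
  assumes "v \<in> S"
  shows "dirichlet_form V c (g u) (g v) = g u v - g u r"
proof -
  have "dirichlet_form V c (g u) (g v) = (\<Sum>x\<in>V. g u x * laplacian V c (g v) x)"
    by (simp only: green_identity[OF sym] dirichlet_form_sym)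
  also have "\<dots> = (\<Sum>x\<in>V. g u x * delta v x) - (\<Sum>x\<in>V. g u x * delta r x)"
    using unit_current assms by (simp add: right_diff_distrib sum_subtractf)
  also have "\<dots> = g u v - g u r"
    using assms r S_sub by (simp add: sum_times_delta[OF finite_V] subsetD)
  finally show ?thesis .
qed

lemma kron_potential_sum:
  assumes "u \<in> S"
  shows "(\<Sum>v\<in>S. kron u v * dirichlet_form V c (g u) (g v)) = 1 - delta r u"
proof -
  have "(\<Sum>v\<in>S. kron u v * dirichlet_form V c (g u) (g v))
      = (\<Sum>v\<in>S. g u v * kron u v - g u r * kron u v)"
    by (intro sum.cong refl) (simp add: potential_dirichlet_form right_diff_distrib mult.commute)
  also have "\<dots> = (\<Sum>v\<in>S. g u v * kron u v) - g u r * (\<Sum>v\<in>S. kron u v)"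
    by (simp add: sum_subtractf sum_distrib_left)
  also have "\<dots> = (\<Sum>x\<in>V. g u x * laplacian V c (harmonic_measure u) x)"
    by (simp add: kron_row_sum sum_against_kron)
  also have "\<dots> = (\<Sum>x\<in>V. harmonic_measure u x * laplacian V c (g u) x)"
    by (simp only: green_identity[OF sym] dirichlet_form_sym)
  also have "\<dots> = (\<Sum>x\<in>V. harmonic_measure u x * delta u x)
                  - (\<Sum>x\<in>V. harmonic_measure u x * delta r x)"
    using unit_current assms by (simp add: right_diff_distrib sum_subtractf)
  also have "\<dots> = harmonic_measure u u - harmonic_measure u r"
    using assms r S_sub by (simp add: sum_times_delta[OF finite_V] subsetD)
  also have "\<dots> = 1 - delta r u"
    using harmonic_measure[of u] assms r by (auto simp: delta_def)
  finally show ?thesis .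
qed

lemma kron_trace_identity:
  "(\<Sum>u\<in>S. \<Sum>v\<in>S. kron u v * energy V c (\<lambda>x. g u x - g v x)) = - 2 * (real (card S) - 1)"
proof -
  define M where "M u v = dirichlet_form V c (g u) (g v)" for u v
  have energy_expand: "energy V c (\<lambda>x. g u x - g v x) = M u u + M v v - 2 * M u v" for u v
    using dirichlet_form_expand[of V c "g u" 1 "g v"] unfolding M_def energy_eq_dirichlet_form
    by simp
  have "kron u v * energy V c (\<lambda>x. g u x - g v x)
      = M u u * kron u v + kron u v * M v v - 2 * (kron u v * M u v)" for u v
    unfolding energy_expand by (simp add: algebra_simps)
  then have expansion: "(\<Sum>u\<in>S. \<Sum>v\<in>S. kron u v * energy V c (\<lambda>x. g u x - g v x))
      = (\<Sum>u\<in>S. M u u * (\<Sum>v\<in>S. kron u v)) + (\<Sum>u\<in>S. \<Sum>v\<in>S. kron u v * M v v)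
        - 2 * (\<Sum>u\<in>S. \<Sum>v\<in>S. kron u v * M u v)"
    by (simp add: sum.distrib sum_subtractf sum_distrib_left)
  have rows: "(\<Sum>u\<in>S. M u u * (\<Sum>v\<in>S. kron u v)) = 0"
    by (simp add: kron_row_sum)
  have "(\<Sum>u\<in>S. \<Sum>v\<in>S. kron u v * M v v) = (\<Sum>v\<in>S. \<Sum>u\<in>S. kron u v * M v v)"
    by (rule sum.swap)
  also have "\<dots> = (\<Sum>v\<in>S. \<Sum>u\<in>S. M v v * kron v u)"
  proof (intro sum.cong refl)
    fix v u assume "v \<in> S" "u \<in> S"
    then show "kron u v * M v v = M v v * kron v u"
      using kron_sym[of u v] by (simp add: mult.commute)
  qed
  also have "\<dots> = (\<Sum>v\<in>S. M v v * (\<Sum>u\<in>S. kron v u))"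
    by (simp add: sum_distrib_left)
  finally have columns: "(\<Sum>u\<in>S. \<Sum>v\<in>S. kron u v * M v v) = 0"
    by (simp add: kron_row_sum)
  have "(\<Sum>u\<in>S. \<Sum>v\<in>S. kron u v * M u v) = (\<Sum>u\<in>S. 1 - delta r u)"
    unfolding M_def using kron_potential_sum by simp
  also have "\<dots> = real (card S) - 1"
    using sum_times_delta[OF finite_S r, of "\<lambda>_. 1"] by (simp add: sum_subtractf mult.commute)
  finally show ?thesis using expansion rows columns by simp
qed

end

lemma kron_diag_sum_bound:
  assumes "S \<noteq> {}"
    and separated: "\<forall>u\<in>S. \<forall>v\<in>S. u \<noteq> v \<longrightarrow> 0 < eff_cond V c u {v} \<and> \<epsilon> \<le> 1 / eff_cond V c u {v}"
  shows "\<epsilon> * (\<Sum>u\<in>S. kron u u) \<le> 2 * (real (card S) - 1)"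
proof -
  obtain r where r: "r \<in> S" using assms(1) by blast
  have "\<forall>w\<in>S. \<exists>h. \<forall>x\<in>V. laplacian V c h x = delta w x - delta r x"
  proof
    fix w assume w: "w \<in> S"
    show "\<exists>h. \<forall>x\<in>V. laplacian V c h x = delta w x - delta r x"
    proof (cases "w = r")
      case True
      then show ?thesis by (intro exI[of _ "\<lambda>_. 0"]) (simp add: laplacian_def)
    next
      case False
      then show ?thesis using unit_current_exists w r separated S_sub by blast
    qed
  qed
  then obtain g where unit_current: "\<forall>w\<in>S. \<forall>x\<in>V. laplacian V c (g w) x = delta w x - delta r x"
    by metis
  have resistance: "\<epsilon> \<le> energy V c (\<lambda>x. g u x - g v x)" if "u \<in> S" "v \<in> S" "u \<noteq> v" for u v
  proof -
    have "\<forall>x\<in>V. laplacian V c (\<lambda>x. g u x - g v x) x = delta u x - delta v x"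
      using unit_current that by (simp add: laplacian_diff)
    then have "1 \<le> eff_cond V c u {v} * energy V c (\<lambda>x. g u x - g v x)"
      using unit_current_energy that S_sub by blast
    moreover have pos: "0 < eff_cond V c u {v}" and "\<epsilon> \<le> 1 / eff_cond V c u {v}"
      using separated that by auto
    moreover from this have "eff_cond V c u {v} * \<epsilon> \<le> 1" by (simp add: field_simps)
    ultimately have "eff_cond V c u {v} * \<epsilon> \<le> eff_cond V c u {v} * energy V c (\<lambda>x. g u x - g v x)"
      by linarith
    then show ?thesis using mult_left_le_imp_le pos by blast
  qed
  have "(\<Sum>v\<in>S. kron u v * energy V c (\<lambda>x. g u x - g v x)) \<le> - \<epsilon> * kron u u" if "u \<in> S" for u
    using that resistance kron_offdiag_nonpos
    by (intro row_estimate[OF finite_S _ kron_row_sum]) (auto simp: energy_def)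
  then have "- 2 * (real (card S) - 1) \<le> (\<Sum>u\<in>S. - \<epsilon> * kron u u)"
    unfolding kron_trace_identity[OF r unit_current, symmetric] by (rule sum_mono)
  then show ?thesis by (simp add: sum_distrib_left sum_negf)
qed

lemma R_eff_set_ge_inverse_kron:
  assumes "card S \<ge> 2" and "v \<in> S" and "\<forall>w\<in>S. w \<noteq> v \<longrightarrow> 0 < eff_cond V c v {w}"
    and "kron v v \<le> K"
  shows "1 / K \<le> R_eff_set V c v (S - {v})"
proof -
  obtain w where w: "w \<in> S" "w \<noteq> v" using exists_other_point[OF assms(1), of v] by blast
  have "0 < eff_cond V c v {w}" using assms(3) w by blast
  moreover have "eff_cond V c v {w} \<le> eff_cond V c v (S - {v})"
    using w by (intro eff_cond_mono[OF nonneg]) auto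
  moreover have "eff_cond V c v (S - {v}) \<le> K"
    using eff_cond_le_kron_diag[OF assms(2)] assms(4) by linarith
  ultimately show ?thesis unfolding R_eff_set_def by (simp add: frac_le)
qed

end

lemma eff_cond_separation:
  assumes "\<epsilon> > 0" and "\<forall>u\<in>S. \<forall>v\<in>S. u \<noteq> v \<longrightarrow> R_eff V c u v \<ge> \<epsilon>"
  shows "\<forall>u\<in>S. \<forall>v\<in>S. u \<noteq> v \<longrightarrow> 0 < eff_cond V c u {v} \<and> \<epsilon> \<le> 1 / eff_cond V c u {v}"
proof (intro ballI impI)
  fix u v assume "u \<in> S" "v \<in> S" "u \<noteq> v"
  with assms(2) have "\<epsilon> \<le> 1 / eff_cond V c u {v}"
    unfolding R_eff_def R_eff_set_def by blast
  moreover from this have "0 < eff_cond V c u {v}"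
    using assms(1) zero_less_divide_1_iff by fastforce
  ultimately show "0 < eff_cond V c u {v} \<and> \<epsilon> \<le> 1 / eff_cond V c u {v}" by blast
qed

theorem mainTheorem15:
  fixes V :: "'a set" and c :: "'a \<Rightarrow> 'a \<Rightarrow> real" and \<epsilon> :: real and S :: "'a set"
  assumes "network V c"
    and "\<epsilon> > 0"
    and "S \<subseteq> V"
    and "card S \<ge> 2"
    and "\<forall>u\<in>S. \<forall>v\<in>S. u \<noteq> v \<longrightarrow> R_eff V c u v \<ge> \<epsilon>"
  shows "\<exists>S'\<subseteq>S. 2 * card S' \<ge> card S \<and> (\<forall>v\<in>S'. R_eff_set V c v (S - {v}) \<ge> \<epsilon> / 4)"
proof -
  interpret terminal_set V c S
    using assms(1,3) by unfold_locales (auto simp: network_def)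
  have separated: "\<forall>u\<in>S. \<forall>v\<in>S. u \<noteq> v \<longrightarrow> 0 < eff_cond V c u {v} \<and> \<epsilon> \<le> 1 / eff_cond V c u {v}"
    using eff_cond_separation[OF assms(2,5)] .
  have "S \<noteq> {}" using exists_other_point[OF assms(4)] by blast
  define S' where "S' = {u\<in>S. kron u u \<le> 4 / \<epsilon>}"
  have "\<epsilon> * (\<Sum>u\<in>S. kron u u) \<le> 2 * real (card S)"
    using kron_diag_sum_bound[OF \<open>S \<noteq> {}\<close> separated] by simp
  moreover have "\<forall>u\<in>S. 0 \<le> kron u u" using kron_diag_nonneg by blast
  ultimately have "card S \<le> 2 * card S'"
    unfolding S'_def by (rule markov_counting[OF finite_S assms(2), rotated])
  moreover have "\<epsilon> / 4 \<le> R_eff_set V c v (S - {v})" if "v \<in> S'" for v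
  proof -
    have v: "v \<in> S" "kron v v \<le> 4 / \<epsilon>" using that by (simp_all add: S'_def)
    have "\<forall>w\<in>S. w \<noteq> v \<longrightarrow> 0 < eff_cond V c v {w}" using separated v(1) by auto
    from R_eff_set_ge_inverse_kron[OF assms(4) v(1) this v(2)] show ?thesis
      by (simp only: divide_divide_eq_right mult_1)
  qed
  moreover have "S' \<subseteq> S" unfolding S'_def by blast
  ultimately show ?thesis by blast
qed

end
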